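(* Let $M$ be a closed Riemannian manifold and $H$ a finite subgroup of the isometry group of $M$, and let $\pi:M\to M/H$ be the quotient map. If the Radon transform is injective on $M$, then it is also injective on the quotient $M/H$.
   Context: For a closed Riemannian manifold $M$, periodic geodesics are nonconstant constant-speed geodesics $\gamma:[0,1]\to M$ with $\gamma(0)=\gamma(1)$, and the Radon transform of a smooth function $f$ on $M$ is $R_Mf(\gamma)=\int_0^1 f(\gamma(t))\,\mathrm{d}t$; injectivity means $R_Mf=0$ implies $f=0$ for smooth $f$. On $M/H$, a function $f$ is smooth when $f\circ\pi$ is smooth on $M$; periodic geodesics of $M/H$ are closed curves $c:[0,1]\to M/H$ that locally lift to constant-speed geodesics of $M$ (in particular $\pi\circ\gamma$ is one for every periodic geodesic $\gamma$ of $M$), and $R_{M/H}f(c)=\int_0^1 f(c(t))\,\mathrm{d}t$. Injectivity on $M/H$ means that $R_{M/H}f(c)=0$ for all such $c$ implies $f=0$. *)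

theory Defs
  imports "HOL-Analysis.Analysis"
begin

fun ck_on :: "nat \<Rightarrow> 'a::euclidean_space set \<Rightarrow> ('a \<Rightarrow> 'b::real_normed_vector) \<Rightarrow> bool" where
  "ck_on 0 U f = continuous_on U f"
| "ck_on (Suc k) U f = (f differentiable_on U \<and>
      (\<forall>v. ck_on k U (\<lambda>x. frechet_derivative f (at x) v)))"

definition smooth_on :: "'a::euclidean_space set \<Rightarrow> ('a \<Rightarrow> 'b::real_normed_vector) \<Rightarrow> bool" where
  "smooth_on U f \<longleftrightarrow> (\<forall>k. ck_on k U f)"

definition embedded_submanifold :: "(real^'n) set \<Rightarrow> bool" where
  "embedded_submanifold M \<longleftrightarrow>
    (\<forall>p\<in>M. \<exists>U V (\<phi>::real^'n \<Rightarrow> real^'n) \<psi> (S::'n set).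
       open U \<and> p \<in> U \<and> open V \<and> \<phi> ` U = V \<and>
       smooth_on U \<phi> \<and> smooth_on V \<psi> \<and>
       (\<forall>x\<in>U. \<psi> (\<phi> x) = x) \<and> (\<forall>y\<in>V. \<phi> (\<psi> y) = y) \<and>
       \<phi> ` (M \<inter> U) = V \<inter> {y. \<forall>i. i \<notin> S \<longrightarrow> y $ i = 0})"

(* closed manifold = compact, boundaryless; Riemannian structure = induced from R^n
   (every closed Riemannian manifold arises this way by Nash's embedding theorem) *)
definition closed_riemannian_submanifold :: "(real^'n) set \<Rightarrow> bool" where
  "closed_riemannian_submanifold M \<longleftrightarrow> compact M \<and> embedded_submanifold M"

definition smooth_on_mfd :: "(real^'n) set \<Rightarrow> (real^'n \<Rightarrow> 'b::real_normed_vector) \<Rightarrow> bool" where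
  "smooth_on_mfd M g \<longleftrightarrow>
    (\<forall>p\<in>M. \<exists>U G. open U \<and> p \<in> U \<and> smooth_on U G \<and> (\<forall>x\<in>M \<inter> U. G x = g x))"

definition tangent_space :: "(real^'n) set \<Rightarrow> real^'n \<Rightarrow> (real^'n) set" where
  "tangent_space M p = {v. \<exists>e>0. \<exists>c. smooth_on (ball 0 e) c \<and> c ` ball 0 e \<subseteq> M \<and>
                                c 0 = p \<and> vector_derivative c (at 0) = v}"

definition geodesic_on :: "(real^'n) set \<Rightarrow> real set \<Rightarrow> (real \<Rightarrow> real^'n) \<Rightarrow> bool" where
  "geodesic_on M I g \<longleftrightarrow> open I \<and> smooth_on I g \<and> g ` I \<subseteq> M \<and>
     (\<forall>t\<in>I. \<forall>v\<in>tangent_space M (g t).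
        vector_derivative (\<lambda>s. vector_derivative g (at s)) (at t) \<bullet> v = 0)"

(* periodic geodesic, viewed as a 1-periodic geodesic on R (restricted to [0,1]) *)
definition periodic_geodesic :: "(real^'n) set \<Rightarrow> (real \<Rightarrow> real^'n) \<Rightarrow> bool" where
  "periodic_geodesic M \<gamma> \<longleftrightarrow> geodesic_on M UNIV \<gamma> \<and> (\<forall>t. \<gamma> (t + 1) = \<gamma> t) \<and>
     (\<exists>s t. \<gamma> s \<noteq> \<gamma> t)"

definition radon_injective :: "(real^'n) set \<Rightarrow> bool" where
  "radon_injective M \<longleftrightarrow>
    (\<forall>f::real^'n \<Rightarrow> real. smooth_on_mfd M f \<and>
       (\<forall>\<gamma>. periodic_geodesic M \<gamma> \<longrightarrow> integral {0..1} (\<lambda>t. f (\<gamma> t)) = 0)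
       \<longrightarrow> (\<forall>x\<in>M. f x = 0))"

definition riemannian_isometry :: "(real^'n) set \<Rightarrow> (real^'n \<Rightarrow> real^'n) \<Rightarrow> bool" where
  "riemannian_isometry M h \<longleftrightarrow> bij_betw h M M \<and> (\<forall>x. x \<notin> M \<longrightarrow> h x = x) \<and>
     smooth_on_mfd M h \<and> smooth_on_mfd M (inv_into M h) \<and>
     (\<forall>I c. open I \<and> smooth_on I c \<and> c ` I \<subseteq> M \<longrightarrow>
        (\<forall>t\<in>I. norm (vector_derivative (h \<circ> c) (at t)) = norm (vector_derivative c (at t))))"

definition finite_isometry_subgroup :: "(real^'n) set \<Rightarrow> (real^'n \<Rightarrow> real^'n) set \<Rightarrow> bool" where
  "finite_isometry_subgroup M H \<longleftrightarrow> finite H \<and> (\<forall>h\<in>H. riemannian_isometry M h) \<and>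
     id \<in> H \<and> (\<forall>g\<in>H. \<forall>h\<in>H. g \<circ> h \<in> H) \<and> (\<forall>h\<in>H. \<exists>g\<in>H. g \<circ> h = id)"

definition orbit_map :: "(real^'n \<Rightarrow> real^'n) set \<Rightarrow> real^'n \<Rightarrow> (real^'n) set" where
  "orbit_map H x = (\<lambda>h. h x) ` H"

definition quotient_space :: "(real^'n) set \<Rightarrow> (real^'n \<Rightarrow> real^'n) set \<Rightarrow> (real^'n) set set" where
  "quotient_space M H = orbit_map H ` M"

definition quotient_periodic_geodesic ::
  "(real^'n) set \<Rightarrow> (real^'n \<Rightarrow> real^'n) set \<Rightarrow> (real \<Rightarrow> (real^'n) set) \<Rightarrow> bool" where
  "quotient_periodic_geodesic M H c \<longleftrightarrow>
     (\<forall>t. c (t + 1) = c t) \<and> (\<exists>s t. c s \<noteq> c t) \<and>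
     (\<forall>t. \<exists>e>0. \<exists>g. geodesic_on M {t - e<..<t + e} g \<and>
          (\<forall>s\<in>{t - e<..<t + e}. c s = orbit_map H (g s)))"

definition quotient_radon_injective :: "(real^'n) set \<Rightarrow> (real^'n \<Rightarrow> real^'n) set \<Rightarrow> bool" where
  "quotient_radon_injective M H \<longleftrightarrow>
    (\<forall>f::(real^'n) set \<Rightarrow> real. smooth_on_mfd M (\<lambda>x. f (orbit_map H x)) \<and>
       (\<forall>c. quotient_periodic_geodesic M H c \<longrightarrow> integral {0..1} (\<lambda>t. f (c t)) = 0)
       \<longrightarrow> (\<forall>q\<in>quotient_space M H. f q = 0))"

end

theory Submission
  imports Defs
begin

text \<open>If \<open>f\<close> integrates to zero over every periodic geodesic of \<open>M/H\<close>, then \<open>f \<circ> \<pi>\<close>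
  integrates to zero over every periodic geodesic \<open>\<gamma>\<close> of \<open>M\<close>, because \<open>\<pi> \<circ> \<gamma>\<close> is a periodic
  geodesic of \<open>M/H\<close>: it lifts to \<open>\<gamma>\<close> itself, and it is nonconstant since a connected curve
  through finitely many points (a single finite orbit) is constant. Injectivity on \<open>M\<close> then
  gives \<open>f \<circ> \<pi> = 0\<close>, i.e. \<open>f = 0\<close> on \<open>M/H\<close>.\<close>

lemma ck_on_subset: "ck_on k U f \<Longrightarrow> V \<subseteq> U \<Longrightarrow> ck_on k V f"
proof (induction k arbitrary: f)
  case 0
  then show ?case using continuous_on_subset by auto
next
  case (Suc k)
  then show ?case using differentiable_on_subset by auto
qed

lemma smooth_on_subset: "smooth_on U f \<Longrightarrow> V \<subseteq> U \<Longrightarrow> smooth_on V f"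
  unfolding smooth_on_def using ck_on_subset by blast

lemma geodesic_on_subset: "geodesic_on M I g \<Longrightarrow> open J \<Longrightarrow> J \<subseteq> I \<Longrightarrow> geodesic_on M J g"
  unfolding geodesic_on_def using smooth_on_subset by blast

lemma geodesic_on_continuous_on: "geodesic_on M I g \<Longrightarrow> continuous_on I g"
  unfolding geodesic_on_def smooth_on_def by (metis ck_on.simps(1))

lemma continuous_on_finite_range_const:
  fixes g :: "real \<Rightarrow> 'a::metric_space"
  assumes "continuous_on UNIV g" "finite (range g)"
  shows "g s = g t"
proof -
  have "connected (range g)"
    using connected_continuous_image[OF assms(1) connected_UNIV] by simp
  then obtain a where "range g = {a}"
    using assms(2) connected_finite_iff_sing by auto
  then show ?thesis by (metis rangeI singletonD)
qed

lemma finite_orbit_map: "finite H \<Longrightarrow> finite (orbit_map H x)"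
  unfolding orbit_map_def by simp

lemma orbit_map_self: "id \<in> H \<Longrightarrow> x \<in> orbit_map H x"
  unfolding orbit_map_def by (metis id_apply image_eqI)

lemma orbit_map_comp_nonconstant:
  fixes \<gamma> :: "real \<Rightarrow> real^'n"
  assumes "finite H" "id \<in> H" "continuous_on UNIV \<gamma>" "\<gamma> s \<noteq> \<gamma> t"
  shows "\<exists>s t. orbit_map H (\<gamma> s) \<noteq> orbit_map H (\<gamma> t)"
proof (rule ccontr)
  assume "\<not> ?thesis"
  then have "range \<gamma> \<subseteq> orbit_map H (\<gamma> 0)"
    using orbit_map_self[OF assms(2)] by (metis image_subsetI)
  then have "finite (range \<gamma>)"
    using finite_orbit_map[OF assms(1)] finite_subset by blast
  then show False
    using continuous_on_finite_range_const[OF assms(3)] assms(4) by blast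
qed

lemma quotient_periodic_geodesic_orbit_map:
  assumes "finite_isometry_subgroup M H" "periodic_geodesic M \<gamma>"
  shows "quotient_periodic_geodesic M H (\<lambda>t. orbit_map H (\<gamma> t))"
proof -
  have geo: "geodesic_on M UNIV \<gamma>" and per: "\<forall>t. \<gamma> (t + 1) = \<gamma> t"
    and "\<exists>s t. \<gamma> s \<noteq> \<gamma> t"
    using assms(2) unfolding periodic_geodesic_def by auto
  moreover have "finite H" "id \<in> H"
    using assms(1) unfolding finite_isometry_subgroup_def by auto
  ultimately have nonconst: "\<exists>s t. orbit_map H (\<gamma> s) \<noteq> orbit_map H (\<gamma> t)"
    using orbit_map_comp_nonconstant geodesic_on_continuous_on by blast
  have "\<exists>e>0. \<exists>g. geodesic_on M {t - e<..<t + e} g \<and>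
          (\<forall>s\<in>{t - e<..<t + e}. orbit_map H (\<gamma> s) = orbit_map H (g s))" for t
    using geodesic_on_subset[OF geo, of "{t - 1<..<t + 1}"]
    by (intro exI[of _ 1] conjI exI[of _ \<gamma>]) auto
  then show ?thesis
    unfolding quotient_periodic_geodesic_def using per nonconst by simp
qed

theorem proposition2p4:
  fixes M :: "(real^'n) set" and H :: "(real^'n \<Rightarrow> real^'n) set"
  assumes "closed_riemannian_submanifold M"
    and "finite_isometry_subgroup M H"
    and "radon_injective M"
  shows "quotient_radon_injective M H"
  unfolding quotient_radon_injective_def
proof (intro allI impI)
  fix f :: "(real^'n) set \<Rightarrow> real"
  assume smooth: "smooth_on_mfd M (\<lambda>x. f (orbit_map H x)) \<and>
       (\<forall>c. quotient_periodic_geodesic M H c \<longrightarrow> integral {0..1} (\<lambda>t. f (c t)) = 0)"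
  then have "\<forall>\<gamma>. periodic_geodesic M \<gamma> \<longrightarrow> integral {0..1} (\<lambda>t. f (orbit_map H (\<gamma> t))) = 0"
    using quotient_periodic_geodesic_orbit_map[OF assms(2)] by blast
  then have "\<forall>x\<in>M. f (orbit_map H x) = 0"
    using assms(3) smooth unfolding radon_injective_def by blast
  then show "\<forall>q\<in>quotient_space M H. f q = 0"
    unfolding quotient_space_def by auto
qed

end
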